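(* In the setting described in the context, for each $t$: if $\theta_{t-1}\ge0$, then $p^+_t(\theta_{t-1})\,p^-_t(\theta_{t-1})=0$, i.e. the policy does not charge and discharge simultaneously; equivalently, simultaneous charging and discharging under the policy requires the Lagrangian dual $\theta_{t-1}$ to be negative.
   Context: Efficiency $\eta\in(0,1]$, power limit $P>0$. $O_t:\mathbb{R}\to\mathbb{R}$ convex with (nondecreasing) derivative $o_t$. Define $\varphi_t(x)=\sup\{y\in\mathbb{R}: o_t(y)\le x\}$, $[x]^y_z=\max\{\min\{x,y\},z\}$, and for $x\in\mathbb{R}$ the discharge and charge components $p^+_t(x)=[\varphi_t(-x/\eta)]^P_0$, $p^-_t(x)=[-\varphi_t(-x\eta)]^P_0$. Here $\theta_{t-1}$ is the Lagrange multiplier of the state-of-charge dynamics constraint $e_t-e_{t-1}=-p_t^+/\eta+p_t^-\eta$ in the storage control problem of minimizing $\sum_t O_t(p_t)+C_T(e_T)$ subject to $p_t=p^+_t-p^-_t$, $0\le p^\pm_t\le P$, $0\le e_t\le E$. *)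

theory Defs
  imports "HOL-Analysis.Analysis"
begin

text \<open>The generalized inverse of the marginal cost o:
  phi(x) = sup {y. mc y \<le> x}, taken in the extended reals so that the
  empty set (value -infinity) and unbounded sets (value +infinity) are covered.\<close>
definition phi :: "(real \<Rightarrow> real) \<Rightarrow> real \<Rightarrow> ereal" where
  "phi mc x = Sup (ereal ` {y. mc y \<le> x})"

definition clip :: "ereal \<Rightarrow> real \<Rightarrow> real \<Rightarrow> real" where
  "clip x y z = real_of_ereal (max (min x (ereal y)) (ereal z))"

definition p_plus :: "real \<Rightarrow> real \<Rightarrow> (real \<Rightarrow> real) \<Rightarrow> real \<Rightarrow> real" where
  "p_plus \<eta> P mc x = clip (phi mc (- x / \<eta>)) P 0"

definition p_minus :: "real \<Rightarrow> real \<Rightarrow> (real \<Rightarrow> real) \<Rightarrow> real \<Rightarrow> real" where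
  "p_minus \<eta> P mc x = clip (- phi mc (- x * \<eta>)) P 0"

end

theory Submission
  imports Defs
begin

text \<open>Since \<open>\<eta> \<le> 1\<close>, a nonnegative multiplier x gives \<open>-x/\<eta> \<le> -x\<eta>\<close>, and \<open>\<phi>\<close> is
  monotone. So if the discharge argument \<open>\<phi>(-x/\<eta>)\<close> is positive, then so is
  \<open>\<phi>(-x\<eta>)\<close>, and the charge component is clipped to 0. No property of the cost
  beyond the definition of \<open>\<phi>\<close> is needed.\<close>

lemma phi_mono: "a \<le> b \<Longrightarrow> phi mc a \<le> phi mc b"
  unfolding phi_def by (rule Sup_subset_mono) auto

lemma clip_nonpos: "x \<le> 0 \<Longrightarrow> clip x P 0 = 0"
  unfolding clip_def
  by (metis ereal_zero_times max.absorb2 min.coboundedI1 real_of_ereal_0 zero_ereal_def)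

lemma neg_divide_le_neg_mult:
  fixes x \<eta> :: real
  assumes "0 \<le> x" "0 < \<eta>" "\<eta> \<le> 1"
  shows "- x / \<eta> \<le> - x * \<eta>"
proof -
  have "x * \<eta> \<le> x" using assms by (simp add: mult_left_le)
  also have "x \<le> x / \<eta>" using assms by (simp add: le_divide_eq mult_left_le)
  finally show ?thesis by simp
qed

lemma p_plus_mult_p_minus_eq_0:
  assumes "0 \<le> x" "0 < \<eta>" "\<eta> \<le> 1"
  shows "p_plus \<eta> P mc x * p_minus \<eta> P mc x = 0"
proof (cases "phi mc (- x / \<eta>) \<le> 0")
  case True
  then show ?thesis unfolding p_plus_def by (simp add: clip_nonpos)
next
  case False
  moreover have "phi mc (- x / \<eta>) \<le> phi mc (- x * \<eta>)"
    using phi_mono neg_divide_le_neg_mult[OF assms] by blast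
  ultimately have "- phi mc (- x * \<eta>) \<le> 0" by simp
  then show ?thesis unfolding p_minus_def by (simp add: clip_nonpos)
qed

theorem proposition2:
  fixes \<eta> P :: real
    and Oc mc :: "nat \<Rightarrow> real \<Rightarrow> real"
    and \<theta> :: "nat \<Rightarrow> real"
    and t :: nat
  assumes eta: "0 < \<eta>" "\<eta> \<le> 1"
    and P: "P > 0"
    and conv: "\<And>t. convex_on UNIV (Oc t)"
    and deriv: "\<And>t x. (Oc t has_real_derivative mc t x) (at x)"
    and mono: "\<And>t. mono (mc t)"
    and theta: "\<theta> (t - 1) \<ge> 0"
  shows "p_plus \<eta> P (mc t) (\<theta> (t - 1)) * p_minus \<eta> P (mc t) (\<theta> (t - 1)) = 0"
  using p_plus_mult_p_minus_eq_0[OF theta eta] .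

end
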